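(* Let $V$ be a finite set of nodes and let $C=\{\mathbf{t}^1,\dots,\mathbf{t}^{|C|}\}$ be a finite collection of cascades on $V$, where each cascade $\mathbf{t}^c=(t^c_v)_{v\in V}$ assigns to each node $v$ an infection time $t^c_v\in\mathbb{R}\cup\{\infty\}$ ($t^c_v=\infty$ meaning $v$ is not infected in cascade $c$). For every cascade $c$ and every ordered pair of distinct nodes $(i,j)$ with $t^c_i<t^c_j<\infty$, let $w_c(i,j)=\varepsilon^{-1} f(t^c_j\mid t^c_i;\alpha)\ge 0$, where $f(\cdot\mid\cdot;\alpha)\ge 0$ is a pairwise transmission likelihood and $\varepsilon>0$. For a directed graph $G$ on $V$, identified with its edge set $G\subseteq V\times V$, define $$F(\mathbf{t}^c\mid G)=\sum_{j\in V:\ t^c_j<\infty}\log\Big(1+\sum_{i\in V:\ (i,j)\in G,\ t^c_i<t^c_j} w_c(i,j)\Big),$$ and $F_C(\mathbf{t}^1,\dots,\mathbf{t}^{|C|}\mid G)=\sum_{c} F(\mathbf{t}^c\mid G)$. Then $G\mapsto F_C(\mathbf{t}^1,\dots,\mathbf{t}^{|C|}\mid G)$ is a submodular set function on subsets of $V\times V$, i.e., for all $A\subseteq B\subseteq V\times V$ and every $s\in (V\times V)\setminus B$, $F_C(A\cup\{s\})-F_C(A)\ge F_C(B\cup\{s\})-F_C(B)$.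
   Context: The term $1$ inside the logarithm accounts for an external source node connected to every node by an edge of likelihood $\varepsilon$ (normalized weight $\varepsilon^{-1}\varepsilon=1$), present in every graph including the empty one; thus $F_C$ of the empty graph is $0$. $F_C$ is the improvement in log-likelihood of the observed cascades under $G$ relative to the empty graph, in the model where cascades spread as directed trees over $G$ and the likelihood of a cascade sums, over all spanning trees of the infected nodes supported by $G$, the product of pairwise transmission likelihoods along tree edges. *)

theory Defs
  imports "HOL-Analysis.Analysis" "HOL-Library.Extended_Real"
begin

text \<open>A cascade on V: t v :: ereal, with t v = \<infinity> meaning v is not infected.
  The pairwise transmission likelihood f(t_j | t_i; alpha) is given as
  f tj ti (alpha fixed, absorbed into f).\<close>

definition cascade_w :: "(real \<Rightarrow> real \<Rightarrow> real) \<Rightarrow> real \<Rightarrow> ('v \<Rightarrow> ereal) \<Rightarrow> 'v \<Rightarrow> 'v \<Rightarrow> real" where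
  "cascade_w f eps t i j = f (real_of_ereal (t j)) (real_of_ereal (t i)) / eps"

definition cascade_F :: "'v set \<Rightarrow> (real \<Rightarrow> real \<Rightarrow> real) \<Rightarrow> real \<Rightarrow> ('v \<Rightarrow> ereal) \<Rightarrow> ('v \<times> 'v) set \<Rightarrow> real" where
  "cascade_F V f eps t G =
     (\<Sum>j\<in>{j\<in>V. t j < \<infinity>}.
        ln (1 + (\<Sum>i\<in>{i\<in>V. (i, j) \<in> G \<and> t i < t j}. cascade_w f eps t i j)))"

definition cascades_F :: "'v set \<Rightarrow> 'c set \<Rightarrow> (real \<Rightarrow> real \<Rightarrow> real) \<Rightarrow> real \<Rightarrow> ('c \<Rightarrow> 'v \<Rightarrow> ereal) \<Rightarrow> ('v \<times> 'v) set \<Rightarrow> real" where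
  "cascades_F V C f eps t G = (\<Sum>c\<in>C. cascade_F V f eps (t c) G)"

end

theory Submission
  imports Defs
begin

text \<open>Each summand of \<open>cascade_F\<close> is \<open>ln (1 + m G)\<close> with \<open>m\<close> a nonnegative modular function of the
  edge set (the total weight of the edges of \<open>G\<close> into an infected node \<open>j\<close> from earlier nodes).
  Adding an edge increases \<open>m\<close> by the same amount whatever the current graph, and since \<open>ln\<close>
  is concave, that fixed increment gains less the larger \<open>m\<close> already is; sums of submodular
  functions are submodular.\<close>

definition submodular_on :: "'a set \<Rightarrow> ('a set \<Rightarrow> real) \<Rightarrow> bool" where
  "submodular_on S F \<longleftrightarrow>
     (\<forall>A B s. A \<subseteq> B \<longrightarrow> B \<subseteq> S \<longrightarrow> s \<in> S - B \<longrightarrow> F (B \<union> {s}) - F B \<le> F (A \<union> {s}) - F A)"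

lemma submodular_onI:
  assumes "\<And>A B s. A \<subseteq> B \<Longrightarrow> B \<subseteq> S \<Longrightarrow> s \<in> S - B \<Longrightarrow> F (B \<union> {s}) - F B \<le> F (A \<union> {s}) - F A"
  shows "submodular_on S F"
  using assms unfolding submodular_on_def by blast

lemma submodular_onD:
  assumes "submodular_on S F" "A \<subseteq> B" "B \<subseteq> S" "s \<in> S - B"
  shows "F (B \<union> {s}) - F B \<le> F (A \<union> {s}) - F A"
  using assms unfolding submodular_on_def by blast

lemma submodular_on_sum:
  assumes "\<And>c. c \<in> I \<Longrightarrow> submodular_on S (F c)"
  shows "submodular_on S (\<lambda>X. \<Sum>c\<in>I. F c X)"
proof (rule submodular_onI)
  fix A B s assume "A \<subseteq> B" "B \<subseteq> S" "s \<in> S - B"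
  then have "F c (B \<union> {s}) - F c B \<le> F c (A \<union> {s}) - F c A" if "c \<in> I" for c
    using assms that by (blast intro: submodular_onD)
  then show "(\<Sum>c\<in>I. F c (B \<union> {s})) - (\<Sum>c\<in>I. F c B) \<le> (\<Sum>c\<in>I. F c (A \<union> {s})) - (\<Sum>c\<in>I. F c A)"
    unfolding sum_subtractf[symmetric] by (rule sum_mono)
qed

lemma ln_1_add_increment_antimono:
  fixes x y w :: real
  assumes "0 \<le> x" "x \<le> y" "0 \<le> w"
  shows "ln (1 + y + w) - ln (1 + y) \<le> ln (1 + x + w) - ln (1 + x)"
proof -
  have "(1 + y + w) * (1 + x) \<le> (1 + x + w) * (1 + y)"
    using assms by (simp add: algebra_simps mult_left_mono)
  then have "ln ((1 + y + w) * (1 + x)) \<le> ln ((1 + x + w) * (1 + y))"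
    using assms by (subst ln_le_cancel_iff) auto
  then show ?thesis
    using assms by (simp add: ln_mult)
qed

lemma submodular_on_ln_1_add_modular:
  fixes m :: "'a set \<Rightarrow> real" and \<delta> :: "'a \<Rightarrow> real"
  assumes nonneg: "\<And>X. X \<subseteq> S \<Longrightarrow> 0 \<le> m X"
    and mono: "\<And>X Y. X \<subseteq> Y \<Longrightarrow> Y \<subseteq> S \<Longrightarrow> m X \<le> m Y"
    and insert: "\<And>X s. X \<subseteq> S \<Longrightarrow> s \<in> S - X \<Longrightarrow> m (X \<union> {s}) = m X + \<delta> s"
    and increment_nonneg: "\<And>s. s \<in> S \<Longrightarrow> 0 \<le> \<delta> s"
  shows "submodular_on S (\<lambda>X. ln (1 + m X))"
proof (rule submodular_onI)
  fix A B s assume AB: "A \<subseteq> B" and BS: "B \<subseteq> S" and s: "s \<in> S - B"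
  have "ln (1 + m B + \<delta> s) - ln (1 + m B) \<le> ln (1 + m A + \<delta> s) - ln (1 + m A)"
    using AB BS s by (intro ln_1_add_increment_antimono nonneg mono increment_nonneg) auto
  moreover have "m (A \<union> {s}) = m A + \<delta> s" "m (B \<union> {s}) = m B + \<delta> s"
    using AB BS s by (intro insert; auto)+
  ultimately show "ln (1 + m (B \<union> {s})) - ln (1 + m B) \<le> ln (1 + m (A \<union> {s})) - ln (1 + m A)"
    by (simp add: add.assoc)
qed

lemma sum_incoming_insert_edge:
  fixes X :: "('v \<times> 'v) set" and w :: "'v \<Rightarrow> real"
  assumes "finite V" "s \<in> V \<times> V" "s \<notin> X"
  shows "(\<Sum>i\<in>{i\<in>V. (i, j) \<in> X \<union> {s} \<and> P i}. w i)
       = (\<Sum>i\<in>{i\<in>V. (i, j) \<in> X \<and> P i}. w i) + (if snd s = j \<and> P (fst s) then w (fst s) else 0)"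
proof (cases "snd s = j \<and> P (fst s)")
  case True
  then have "{i\<in>V. (i, j) \<in> X \<union> {s} \<and> P i} = insert (fst s) {i\<in>V. (i, j) \<in> X \<and> P i}"
    and "fst s \<notin> {i\<in>V. (i, j) \<in> X \<and> P i}"
    using assms by (cases s; auto)+
  with True \<open>finite V\<close> show ?thesis
    by (simp add: add.commute)
next
  case False
  then have "{i\<in>V. (i, j) \<in> X \<union> {s} \<and> P i} = {i\<in>V. (i, j) \<in> X \<and> P i}"
    by (cases s) auto
  with False show ?thesis
    by (simp only: if_False)
qed

lemma submodular_on_ln_1_add_sum_incoming:
  fixes w :: "'v \<Rightarrow> real"
  assumes "finite V" and "\<And>i. 0 \<le> w i"
  shows "submodular_on (V \<times> V) (\<lambda>X. ln (1 + (\<Sum>i\<in>{i\<in>V. (i, j) \<in> X \<and> P i}. w i)))"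
proof (rule submodular_on_ln_1_add_modular)
  show "0 \<le> (\<Sum>i\<in>{i\<in>V. (i, j) \<in> X \<and> P i}. w i)" for X
    using assms by (simp add: sum_nonneg)
  show "(\<Sum>i\<in>{i\<in>V. (i, j) \<in> X \<and> P i}. w i) \<le> (\<Sum>i\<in>{i\<in>V. (i, j) \<in> Y \<and> P i}. w i)"
    if "X \<subseteq> Y" for X Y :: "('v \<times> 'v) set"
    using assms that by (intro sum_mono2) auto
  show "(\<Sum>i\<in>{i\<in>V. (i, j) \<in> X \<union> {s} \<and> P i}. w i)
      = (\<Sum>i\<in>{i\<in>V. (i, j) \<in> X \<and> P i}. w i) + (if snd s = j \<and> P (fst s) then w (fst s) else 0)"
    if "s \<in> V \<times> V - X" for X s
    using assms(1) that by (intro sum_incoming_insert_edge) auto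
  show "0 \<le> (if snd s = j \<and> P (fst s) then w (fst s) else 0)" for s :: "'v \<times> 'v"
    using assms(2) by simp
qed

lemma cascade_w_nonneg:
  assumes "eps > 0" and "\<And>x y. f x y \<ge> 0"
  shows "0 \<le> cascade_w f eps t i j"
  using assms unfolding cascade_w_def by simp

lemma submodular_on_cascade_F:
  assumes "finite V" and "eps > 0" and "\<And>x y. f x y \<ge> 0"
  shows "submodular_on (V \<times> V) (cascade_F V f eps t)"
  unfolding cascade_F_def
  using assms
  by (intro submodular_on_sum submodular_on_ln_1_add_sum_incoming cascade_w_nonneg)

theorem theorem3:
  fixes V :: "'v set" and C :: "'c set"
    and f :: "real \<Rightarrow> real \<Rightarrow> real" and eps :: real
    and t :: "'c \<Rightarrow> 'v \<Rightarrow> ereal"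
    and A B :: "('v \<times> 'v) set" and s :: "'v \<times> 'v"
  assumes "finite V" and "finite C" and "eps > 0"
    and "\<And>c v. c \<in> C \<Longrightarrow> v \<in> V \<Longrightarrow> t c v \<noteq> -\<infinity>"
    and "\<And>x y. f x y \<ge> 0"
    and "A \<subseteq> B" and "B \<subseteq> V \<times> V" and "s \<in> (V \<times> V) - B"
  shows "cascades_F V C f eps t (A \<union> {s}) - cascades_F V C f eps t A
         \<ge> cascades_F V C f eps t (B \<union> {s}) - cascades_F V C f eps t B"
proof -
  have "submodular_on (V \<times> V) (cascades_F V C f eps t)"
    unfolding cascades_F_def
    using assms(1,3,5) by (intro submodular_on_sum submodular_on_cascade_F)
  then show ?thesis
    using assms(6-8) by (rule submodular_onD)
qed

end
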